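(* In the polynomial ring $\mathbb{Z}_2[y_2,y_3]$ define a sequence $(z_n)_{n\geq1}$ by $z_1=0$, $z_2=1$, $z_3=0$ and $z_n=y_2z_{n-2}+y_3z_{n-3}$ for $n\geq4$. Then $z_n\neq 0$ for every $n\geq1$ that is not of the form $2^i-1$. *)

theory Defs
  imports "HOL-Library.Z2" "HOL-Computational_Algebra.Polynomial"
begin

text \<open>The ring Z_2[y_2, y_3] is represented as (Z_2[y_2])[y_3], i.e. bit poly poly:
  the inner polynomial variable is y_2, the outer one is y_3.\<close>

definition y2 :: "bit poly poly" where "y2 = [:[:0, 1:]:]"
definition y3 :: "bit poly poly" where "y3 = [:0, 1:]"

fun z :: "nat \<Rightarrow> bit poly poly" where
  "z 0 = 0"
| "z (Suc 0) = 0"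
| "z (Suc (Suc 0)) = 1"
| "z (Suc (Suc (Suc 0))) = 0"
| "z (Suc (Suc (Suc (Suc n)))) = y2 * z (Suc (Suc n)) + y3 * z (Suc n)"

end

theory Submission
  imports Defs
begin

text \<open>The cross terms of the addition formula for \<open>z\<close> cancel in characteristic 2, leaving
  \<open>z (2k+1) = y\<^sub>3 z\<^sub>k\<^sup>2\<close>; so passing from an odd index \<open>2k+1\<close> to \<open>k\<close> deletes the last
  binary digit without affecting nonvanishing. Starting from an index not of the form
  \<open>2\<^sup>i - 1\<close>, this reaches a positive even index \<open>2k+2\<close>, where \<open>z\<close> is nonzero because
  its \<open>y\<^sub>3\<close>-free part is \<open>y\<^sub>2\<^sup>k\<close>.\<close>

lemma z_Suc3: "z (n + 3) = y2 * z (n + 1) + y3 * z n"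
  by (cases n) (simp_all add: numeral_eq_Suc)

lemma z_add: "z (m + n + 1) = y3 * z m * z n + z (m + 1) * z (n + 2) + z (m + 2) * z (n + 1)"
proof (induction n rule: less_induct)
  case (less n)
  consider "n = 0" | "n = 1" | "n = 2" | k where "n = k + 3"
    by atomize_elim presburger
  then show ?case
  proof cases
    case 3
    then show ?thesis using z_Suc3[of m] by (simp add: numeral_eq_Suc algebra_simps)
  next
    case 4
    have "z (m + n + 1) = y2 * z (m + (k + 1) + 1) + y3 * z (m + k + 1)"
      using z_Suc3[of "m + k + 1"] 4 by (simp add: algebra_simps)
    then show ?thesis
      using less[of k] less[of "k + 1"] z_Suc3[of k] z_Suc3[of "k + 1"] z_Suc3[of "k + 2"] 4
      by (simp add: numeral_eq_Suc algebra_simps)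
  qed (simp_all add: numeral_eq_Suc)
qed

lemma poly_numeral_2_eq_0: "(2::'a::comm_semiring_1) = 0 \<Longrightarrow> (2::'a poly) = 0"
  by (simp add: numeral_poly)

lemma z_double_Suc: "z (2 * n + 1) = y3 * z n ^ 2"
proof -
  have two: "(2::bit poly poly) = 0"
    by (intro poly_numeral_2_eq_0) simp
  have "z (n + n + 1) = y3 * z n ^ 2 + 2 * (z (n + 1) * z (n + 2))"
    using z_add[of n n] by (simp add: algebra_simps power2_eq_square)
  then show ?thesis
    using two by (simp add: mult_2)
qed

lemma coeff_0_z_even: "coeff (z (2 * k + 2)) 0 = [:0, 1:] ^ k"
proof (induction k)
  case (Suc k)
  have "z (2 * Suc k + 2) = y2 * z (2 * k + 2) + y3 * z (2 * k + 1)"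
    using z_Suc3[of "2 * k + 1"] by (simp add: algebra_simps)
  then show ?case
    using Suc by (simp add: y2_def y3_def)
qed (simp add: numeral_eq_Suc)

lemma z_even_nonzero: "z (2 * k + 2) \<noteq> 0"
  using coeff_0_z_even[of k] by auto

lemma double_Suc_Mersenne: "2 * (2 ^ i - 1) + 1 = (2 ^ Suc i - 1 :: nat)"
  using one_le_power[of "2::nat" i] by (simp only: power_Suc) linarith

theorem lemma9p3:
  fixes n :: nat
  assumes "n \<ge> 1"
    and "\<not> (\<exists>i::nat. n = 2 ^ i - 1)"
  shows "z n \<noteq> 0"
  using assms
proof (induction n rule: less_induct)
  case (less n)
  show ?case
  proof (cases "even n")
    case True
    with \<open>n \<ge> 1\<close> obtain k where "n = 2 * k + 2"
      by (metis evenE mult_Suc_right not0_implies_Suc add.commute not_one_le_zero mult_0_right)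
    then show ?thesis using z_even_nonzero by simp
  next
    case False
    then obtain k where n: "n = 2 * k + 1" by (metis oddE)
    have k_not_Mersenne: "\<not> (\<exists>i. k = 2 ^ i - 1)"
      using less.prems(2) n double_Suc_Mersenne by metis
    then have "k \<noteq> 2 ^ 0 - 1" by blast
    then have "k \<ge> 1" by simp
    with k_not_Mersenne have "z k \<noteq> 0"
      using less.IH n by simp
    moreover have "y3 \<noteq> 0" by (simp add: y3_def)
    ultimately show ?thesis
      unfolding n z_double_Suc by simp
  qed
qed

end
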